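(* For every prime power $k$, the graph $G_k$ satisfies $c(G_k) = k$, $c_{V,\mathrm{r}}(G_k) \leq k+1$ and $c_E(G_k) \geq k(k-1)$.
   Context: A Latin square of order $k$ is a partition $L = L(1) \cup \dots \cup L(k)$ of $A = [k]\times[k]$ such that each row $A[i,\cdot] = \{(i,j) : j \in [k]\}$ and each column meets each part $L(n)$ in exactly one position. Two Latin squares $L_1, L_2$ of order $k$ are orthogonal if $|L_1(n_1)\cap L_2(n_2)| = 1$ for all $n_1,n_2\in[k]$. For a prime power $k$, fix $k-1$ mutually orthogonal Latin squares $L_1,\dots,L_{k-1}$ of order $k$. Let $R = \{A[i,\cdot] : i \in [k]\}$ and $\mathcal{L} = \{L_s(n) : s \in [k-1], n \in [k]\}$. The graph $G_k$ has vertex set $A \cup R \cup \mathcal{L}$ and an edge between $p \in A$ and $S \in R \cup \mathcal{L}$ whenever $p \in S$; no other edges. Games: players alternate turns, cops first; initially the cop player places all cops, then the robber is placed on a vertex (several pieces may share a position). In a turn each piece of the moving player may stay or make one move (no obligation to move). The robber sits on vertices and moves to adjacent vertices; $v_r$ is his current vertex. Classical version: cops on vertices moving to adjacent vertices; cops win if a cop is on $v_r$; $c(G)$ is the least number of cops forcing a win in finitely many turns. Restrictive vertex version: cops on vertices; cops win when every neighbor of $v_r$ is occupied by a cop; after each robber turn (including initial placement) no cop may be on $v_r$, in particular the robber may not move onto a cop-occupied vertex, and if a cop moves onto $v_r$ the robber must leave in his next turn; number $c_{V,\mathrm{r}}(G)$. Edge version: cops sit on edges; a cop on edge $e$ may move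 to any edge sharing an endpoint with $e$; cops win when every edge incident to $v_r$ is occupied by a cop; number $c_E(G)$. *)

theory Defs
  imports "HOL-Computational_Algebra.Primes"
begin

definition cells :: "nat \<Rightarrow> (nat \<times> nat) set" where
  "cells k = {1..k} \<times> {1..k}"

definition row :: "nat \<Rightarrow> nat \<Rightarrow> (nat \<times> nat) set" where
  "row k i = {(i, j) | j. j \<in> {1..k}}"

definition col :: "nat \<Rightarrow> nat \<Rightarrow> (nat \<times> nat) set" where
  "col k j = {(i, j) | i. i \<in> {1..k}}"

definition latin_square :: "nat \<Rightarrow> (nat \<Rightarrow> (nat \<times> nat) set) \<Rightarrow> bool" where
  "latin_square k L \<longleftrightarrow>
     (\<Union>n\<in>{1..k}. L n) = cells k \<and>
     (\<forall>n\<in>{1..k}. L n \<subseteq> cells k) \<and>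
     (\<forall>n\<in>{1..k}. \<forall>n'\<in>{1..k}. n \<noteq> n' \<longrightarrow> L n \<inter> L n' = {}) \<and>
     (\<forall>i\<in>{1..k}. \<forall>n\<in>{1..k}. card (row k i \<inter> L n) = 1) \<and>
     (\<forall>j\<in>{1..k}. \<forall>n\<in>{1..k}. card (col k j \<inter> L n) = 1)"

definition orthogonal :: "nat \<Rightarrow> (nat \<Rightarrow> (nat \<times> nat) set) \<Rightarrow> (nat \<Rightarrow> (nat \<times> nat) set) \<Rightarrow> bool" where
  "orthogonal k L1 L2 \<longleftrightarrow> (\<forall>n1\<in>{1..k}. \<forall>n2\<in>{1..k}. card (L1 n1 \<inter> L2 n2) = 1)"

definition MOLS :: "nat \<Rightarrow> (nat \<Rightarrow> nat \<Rightarrow> (nat \<times> nat) set) \<Rightarrow> bool" where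
  "MOLS k Ls \<longleftrightarrow>
     (\<forall>s\<in>{1..k-1}. latin_square k (Ls s)) \<and>
     (\<forall>s\<in>{1..k-1}. \<forall>t\<in>{1..k-1}. s \<noteq> t \<longrightarrow> orthogonal k (Ls s) (Ls t))"

text \<open>Vertices: cells of A (tagged Cell) and the sets in R \<union> \<L> (tagged Blk).\<close>
datatype gvert = Cell "nat \<times> nat" | Blk "(nat \<times> nat) set"

definition rows_set :: "nat \<Rightarrow> (nat \<times> nat) set set" where
  "rows_set k = {row k i | i. i \<in> {1..k}}"

definition parts_set :: "nat \<Rightarrow> (nat \<Rightarrow> nat \<Rightarrow> (nat \<times> nat) set) \<Rightarrow> (nat \<times> nat) set set" where
  "parts_set k Ls = {Ls s n | s n. s \<in> {1..k-1} \<and> n \<in> {1..k}}"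

definition Gk_V :: "nat \<Rightarrow> (nat \<Rightarrow> nat \<Rightarrow> (nat \<times> nat) set) \<Rightarrow> gvert set" where
  "Gk_V k Ls = Cell ` cells k \<union> Blk ` (rows_set k \<union> parts_set k Ls)"

definition Gk_adj :: "nat \<Rightarrow> (nat \<Rightarrow> nat \<Rightarrow> (nat \<times> nat) set) \<Rightarrow> gvert \<Rightarrow> gvert \<Rightarrow> bool" where
  "Gk_adj k Ls u v \<longleftrightarrow> u \<in> Gk_V k Ls \<and> v \<in> Gk_V k Ls \<and>
     ((\<exists>p S. u = Cell p \<and> v = Blk S \<and> p \<in> S) \<or> (\<exists>p S. u = Blk S \<and> v = Cell p \<and> p \<in> S))"

text \<open>A configuration of m cops is a function C; only the values C i for i < m matter.\<close>
definition occ :: "nat \<Rightarrow> (nat \<Rightarrow> 'a) \<Rightarrow> 'a set" where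
  "occ m C = C ` {..<m}"

definition vstep :: "('v \<Rightarrow> 'v \<Rightarrow> bool) \<Rightarrow> nat \<Rightarrow> (nat \<Rightarrow> 'v) \<Rightarrow> (nat \<Rightarrow> 'v) \<Rightarrow> bool" where
  "vstep adj m C C' \<longleftrightarrow> (\<forall>i<m. C' i = C i \<or> adj (C i) (C' i))"

text \<open>Classical version. cl_win adj m C r: cops at C, robber at r, cops to move;
  the cops can force a win in finitely many turns.\<close>
inductive cl_win :: "('v \<Rightarrow> 'v \<Rightarrow> bool) \<Rightarrow> nat \<Rightarrow> (nat \<Rightarrow> 'v) \<Rightarrow> 'v \<Rightarrow> bool"
  for adj m where
  caught: "r \<in> occ m C \<Longrightarrow> cl_win adj m C r"
| catch: "vstep adj m C C' \<Longrightarrow> r \<in> occ m C' \<Longrightarrow> cl_win adj m C r"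
| move: "vstep adj m C C' \<Longrightarrow> (\<forall>r'. (r' = r \<or> adj r r') \<longrightarrow> cl_win adj m C' r') \<Longrightarrow> cl_win adj m C r"

definition cop_number :: "'v set \<Rightarrow> ('v \<Rightarrow> 'v \<Rightarrow> bool) \<Rightarrow> nat" where
  "cop_number V adj = (LEAST m. \<exists>C. (\<forall>i<m. C i \<in> V) \<and> (\<forall>r\<in>V. cl_win adj m C r))"

text \<open>Restrictive vertex version: cops win when all neighbours of the robber are occupied;
  the robber may never end his turn (or his placement) on a cop-occupied vertex.\<close>
inductive rv_win :: "('v \<Rightarrow> 'v \<Rightarrow> bool) \<Rightarrow> nat \<Rightarrow> (nat \<Rightarrow> 'v) \<Rightarrow> 'v \<Rightarrow> bool"
  for adj m where
  surrounded: "{v. adj r v} \<subseteq> occ m C \<Longrightarrow> rv_win adj m C r"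
| surround: "vstep adj m C C' \<Longrightarrow> {v. adj r v} \<subseteq> occ m C' \<Longrightarrow> rv_win adj m C r"
| move: "vstep adj m C C' \<Longrightarrow>
           (\<forall>r'. (r' = r \<or> adj r r') \<and> r' \<notin> occ m C' \<longrightarrow> rv_win adj m C' r') \<Longrightarrow>
           rv_win adj m C r"

definition rv_cop_number :: "'v set \<Rightarrow> ('v \<Rightarrow> 'v \<Rightarrow> bool) \<Rightarrow> nat" where
  "rv_cop_number V adj =
     (LEAST m. \<exists>C. (\<forall>i<m. C i \<in> V) \<and> (\<forall>r\<in>V. r \<notin> occ m C \<longrightarrow> rv_win adj m C r))"

text \<open>Edge version: cops sit on edges (unordered pairs {u,v} with adj u v).\<close>
definition edges :: "('v \<Rightarrow> 'v \<Rightarrow> bool) \<Rightarrow> 'v set set" where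
  "edges adj = {{u, v} | u v. adj u v}"

definition estep :: "('v \<Rightarrow> 'v \<Rightarrow> bool) \<Rightarrow> nat \<Rightarrow> (nat \<Rightarrow> 'v set) \<Rightarrow> (nat \<Rightarrow> 'v set) \<Rightarrow> bool" where
  "estep adj m C C' \<longleftrightarrow> (\<forall>i<m. C' i = C i \<or> (C' i \<in> edges adj \<and> C i \<inter> C' i \<noteq> {}))"

definition incident :: "('v \<Rightarrow> 'v \<Rightarrow> bool) \<Rightarrow> 'v \<Rightarrow> 'v set set" where
  "incident adj r = {e \<in> edges adj. r \<in> e}"

inductive ed_win :: "('v \<Rightarrow> 'v \<Rightarrow> bool) \<Rightarrow> nat \<Rightarrow> (nat \<Rightarrow> 'v set) \<Rightarrow> 'v \<Rightarrow> bool"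
  for adj m where
  surrounded: "incident adj r \<subseteq> occ m C \<Longrightarrow> ed_win adj m C r"
| surround: "estep adj m C C' \<Longrightarrow> incident adj r \<subseteq> occ m C' \<Longrightarrow> ed_win adj m C r"
| move: "estep adj m C C' \<Longrightarrow> (\<forall>r'. (r' = r \<or> adj r r') \<longrightarrow> ed_win adj m C' r') \<Longrightarrow>
           ed_win adj m C r"

definition edge_cop_number :: "'v set \<Rightarrow> ('v \<Rightarrow> 'v \<Rightarrow> bool) \<Rightarrow> nat" where
  "edge_cop_number V adj =
     (LEAST m. \<exists>C. (\<forall>i<m. C i \<in> edges adj) \<and> (\<forall>r\<in>V. ed_win adj m C r))"

end

theory Submission
  imports Defs
begin

text \<open>\<open>G\<^sub>k\<close> is the incidence graph of the partial linear space whose points are the cells and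
  whose lines are the rows and the parts of the squares: two lines share at most one cell,
  every line has \<open>k\<close> cells and every cell lies on \<open>k\<close> lines.  Hence \<open>G\<^sub>k\<close> is bipartite
  without 4-cycles and of minimum degree \<open>k\<close>.  In such a graph a robber evades fewer than
  \<open>k\<close> cops (Aigner and Fromme), and he evades fewer than \<open>k(k - 1)\<close> edge cops because
  the stars around his \<open>k\<close> neighbours are disjoint and surrounding one of them needs
  \<open>k - 1\<close> cops.  Conversely \<open>k\<close> cops on the rows catch him, since every part is a
  transversal of the rows; in the restrictive game one more cop chases him off his cell
  onto a part, where the row cops surround him.\<close>

lemma exists_uncovered:
  assumes "finite N" and "m < card N"
    and at_most_one: "\<And>i a b. i < m \<Longrightarrow> a \<in> N \<Longrightarrow> b \<in> N \<Longrightarrow> cov i a \<Longrightarrow> cov i b \<Longrightarrow> a = b"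
  shows "\<exists>w\<in>N. \<forall>i<m. \<not> cov i w"
proof (rule ccontr)
  assume "\<not> ?thesis"
  then have "N \<subseteq> (\<Union>i<m. {w\<in>N. cov i w})" by blast
  then have "card N \<le> card (\<Union>i<m. {w\<in>N. cov i w})"
    using \<open>finite N\<close> by (intro card_mono) auto
  also have "\<dots> \<le> (\<Sum>i<m. card {w\<in>N. cov i w})" by (rule card_UN_le) simp
  also have "\<dots> \<le> (\<Sum>i<m. 1)"
  proof (rule sum_mono)
    fix i assume "i \<in> {..<m}"
    then show "card {w\<in>N. cov i w} \<le> 1"
      using at_most_one[of i] \<open>finite N\<close> by (simp add: card_le_Suc0_iff_eq)
  qed
  finally show False using \<open>m < card N\<close> by simp
qed

lemma in_occ_fun_upd: "i < m \<Longrightarrow> x \<in> occ m (C(i := x))"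
  by (auto simp: occ_def)

lemma vstep_fun_upd: "i < m \<Longrightarrow> adj (C i) x \<Longrightarrow> vstep adj m C (C(i := x))"
  by (simp add: vstep_def)

lemma occ_fun_upd_last: "occ (Suc m) (C(m := x)) = insert x (occ m C)"
  by (auto simp: occ_def lessThan_Suc)

lemma vstep_fun_upd_last:
  "vstep adj (Suc m) (C(m := x)) (C'(m := x')) \<longleftrightarrow> vstep adj m C C' \<and> (x' = x \<or> adj x x')"
  by (auto simp: vstep_def less_Suc_eq)

locale square_free_graph =
  fixes V :: "'v set" and adj :: "'v \<Rightarrow> 'v \<Rightarrow> bool" and d :: nat
  assumes adj_sym: "adj u v \<Longrightarrow> adj v u"
    and adj_in_V: "adj u v \<Longrightarrow> u \<in> V"
    and no_square: "adj x a \<Longrightarrow> adj x b \<Longrightarrow> adj y a \<Longrightarrow> adj y b \<Longrightarrow> a \<noteq> b \<Longrightarrow> x = y"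
    and min_degree: "v \<in> V \<Longrightarrow> d \<le> card {w. adj v w}"
begin

lemma obtain_neighbours:
  assumes "v \<in> V"
  obtains N where "N \<subseteq> {w. adj v w}" "finite N" "card N = d"
  using obtain_subset_with_card_n[OF min_degree[OF assms]] by metis

end

locale girth5_graph = square_free_graph +
  assumes no_triangle: "adj r a \<Longrightarrow> adj r b \<Longrightarrow> \<not> adj a b"
begin

lemma adj_irrefl: "\<not> adj v v"
  using no_triangle by blast

lemma dominates_at_most_one_neighbour:
  assumes "adj r a" "adj r b" "c \<noteq> r" "c = a \<or> adj c a" "c = b \<or> adj c b"
  shows "a = b"
  using assms no_triangle no_square adj_sym by metis

text \<open>Aigner and Fromme: after the cops' move some neighbour of the robber is still
  undominated, since no cop dominates two of his at least \<open>d\<close> neighbours.\<close>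
theorem undominated_robber_escapes:
  assumes "m < d" "r \<in> V" "\<forall>i<m. C i \<noteq> r \<and> \<not> adj (C i) r"
  shows "\<not> cl_win adj m C r"
proof
  assume "cl_win adj m C r"
  then show False using assms(2,3)
  proof (induction rule: cl_win.induct)
    case (caught r C)
    then show ?case by (auto simp: occ_def)
  next
    case (catch C C' r)
    then obtain i where "i < m" "C' i = r" by (auto simp: occ_def)
    with catch show ?case unfolding vstep_def by metis
  next
    case (move C C' r)
    have not_on_r: "C' i \<noteq> r" if "i < m" for i
      using move.hyps(1) move.prems(2) that unfolding vstep_def by metis
    obtain N where N: "N \<subseteq> {w. adj r w}" "finite N" "card N = d"
      using obtain_neighbours[OF move.prems(1)] .
    have "\<exists>w\<in>N. \<forall>i<m. \<not> (C' i = w \<or> adj (C' i) w)"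
      using N not_on_r \<open>m < d\<close> dominates_at_most_one_neighbour
      by (intro exists_uncovered) blast+
    then obtain w where w: "w \<in> N" "\<forall>i<m. C' i \<noteq> w \<and> \<not> adj (C' i) w" by blast
    with N have "adj r w" "w \<in> V" using adj_in_V adj_sym by blast+
    with w show False using move.IH by blast
  qed
qed

end

locale bipartite_square_free_graph = square_free_graph +
  fixes side :: "'v \<Rightarrow> bool"
  assumes adj_side: "adj u v \<Longrightarrow> side u \<noteq> side v"

sublocale bipartite_square_free_graph \<subseteq> girth5_graph
  by unfold_locales (metis adj_side)

context bipartite_square_free_graph
begin

definition star :: "'v \<Rightarrow> 'v \<Rightarrow> 'v set" where
  "star r w = insert w ({x. adj w x} - {r})"

lemma stars_separated:
  assumes r: "adj r w1" "adj r w2" and "w1 \<noteq> w2" and "x \<in> star r w1" "y \<in> star r w2"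
  shows "x \<noteq> y \<and> \<not> adj x y"
proof -
  have x: "x = w1 \<or> adj w1 x \<and> x \<noteq> r" and y: "y = w2 \<or> adj w2 y \<and> y \<noteq> r"
    using assms(4,5) by (auto simp: star_def)
  show ?thesis
  proof (cases "x = w1"; cases "y = w2")
    assume "x = w1" "y = w2"
    then show ?thesis using r \<open>w1 \<noteq> w2\<close> no_triangle by blast
  next
    assume "x = w1" "y \<noteq> w2"
    then show ?thesis using r y \<open>w1 \<noteq> w2\<close> no_triangle no_square adj_sym by metis
  next
    assume "x \<noteq> w1" "y = w2"
    then show ?thesis using r x \<open>w1 \<noteq> w2\<close> no_triangle no_square adj_sym by metis
  next
    assume "x \<noteq> w1" "y \<noteq> w2"
    then have "x \<noteq> y" using r x y \<open>w1 \<noteq> w2\<close> no_square adj_sym by metis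
    moreover have "side x = side y" using r x y \<open>x \<noteq> w1\<close> \<open>y \<noteq> w2\<close> adj_side by metis
    ultimately show ?thesis using adj_side by blast
  qed
qed

lemma cops_needed_to_surround:
  assumes "adj r w" and step: "estep adj m C C'" and surrounded: "incident adj w \<subseteq> occ m C'"
  shows "d - 1 \<le> card {i. i < m \<and> C i \<inter> star r w \<noteq> {}}"
proof -
  have "w \<in> V" using \<open>adj r w\<close> adj_in_V adj_sym by blast
  then obtain N where N: "N \<subseteq> {x. adj w x}" "finite N" "card N = d"
    by (rule obtain_neighbours)
  define X where "X = N - {r}"
  have "\<forall>x\<in>X. \<exists>i<m. C' i = {w, x}"
  proof
    fix x assume "x \<in> X"
    then have "{w, x} \<in> incident adj w" using N unfolding X_def incident_def edges_def by auto
    then show "\<exists>i<m. C' i = {w, x}" using surrounded unfolding occ_def by force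
  qed
  then obtain g where g: "\<forall>x\<in>X. g x < m \<and> C' (g x) = {w, x}" by metis
  have "inj_on g X"
  proof (rule inj_onI)
    fix x x' assume "x \<in> X" "x' \<in> X" "g x = g x'"
    moreover have "x \<noteq> w" "x' \<noteq> w" using \<open>x \<in> X\<close> \<open>x' \<in> X\<close> N adj_irrefl unfolding X_def by auto
    ultimately show "x = x'" using g by (metis doubleton_eq_iff)
  qed
  moreover have "g ` X \<subseteq> {i. i < m \<and> C i \<inter> star r w \<noteq> {}}"
  proof
    fix i assume "i \<in> g ` X"
    then obtain x where x: "x \<in> X" "i = g x" by blast
    then have "{w, x} \<subseteq> star r w" using N unfolding X_def star_def by auto
    moreover have "C i = C' i \<or> C i \<inter> C' i \<noteq> {}"
      using step g x unfolding estep_def by metis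
    ultimately show "i \<in> {i. i < m \<and> C i \<inter> star r w \<noteq> {}}" using g x by auto
  qed
  ultimately have "card X \<le> card {i. i < m \<and> C i \<inter> star r w \<noteq> {}}"
    by (intro card_inj_on_le) auto
  moreover have "d - 1 \<le> card X" using N unfolding X_def by (simp add: card_Diff_singleton_if)
  ultimately show ?thesis by linarith
qed

text \<open>The stars of distinct neighbours of the robber are pairwise non-adjacent, so every cop
  touches at most one of them; surrounding a neighbour \<open>w\<close> takes \<open>d - 1\<close> cops touching its star.\<close>
lemma some_neighbour_unsurroundable:
  assumes "m < d * (d - 1)" and on_edges: "\<forall>i<m. C i \<in> edges adj" and "r \<in> V"
  shows "\<exists>w. adj r w \<and> \<not> (\<exists>C'. estep adj m C C' \<and> incident adj w \<subseteq> occ m C')"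
proof -
  obtain N where N: "N \<subseteq> {w. adj r w}" "finite N" "card N = d"
    using obtain_neighbours[OF \<open>r \<in> V\<close>] .
  define I where "I w = {i. i < m \<and> C i \<inter> star r w \<noteq> {}}" for w
  have disjoint: "I w1 \<inter> I w2 = {}" if "w1 \<in> N" "w2 \<in> N" "w1 \<noteq> w2" for w1 w2
  proof (rule ccontr)
    assume "I w1 \<inter> I w2 \<noteq> {}"
    then obtain i where "i < m" "C i \<inter> star r w1 \<noteq> {}" "C i \<inter> star r w2 \<noteq> {}"
      unfolding I_def by blast
    moreover obtain a b where "C i = {a, b}" "adj a b"
      using on_edges \<open>i < m\<close> unfolding edges_def by blast
    ultimately obtain x y where "x \<in> {a, b}" "x \<in> star r w1" "y \<in> {a, b}" "y \<in> star r w2"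
      by blast
    moreover have "x \<noteq> y \<and> \<not> adj x y" using stars_separated that N calculation by blast
    ultimately show False using \<open>adj a b\<close> adj_sym by blast
  qed
  have "(\<Sum>w\<in>N. card (I w)) = card (\<Union>w\<in>N. I w)"
    using N disjoint by (intro card_UN_disjoint[symmetric]) (auto simp: I_def)
  also have "\<dots> \<le> card {..<m}" by (intro card_mono) (auto simp: I_def)
  finally have "(\<Sum>w\<in>N. card (I w)) < d * (d - 1)" using assms(1) by simp
  moreover have "d * (d - 1) \<le> (\<Sum>w\<in>N. card (I w))" if "\<forall>w\<in>N. d - 1 \<le> card (I w)"
    using sum_bounded_below[of N "d - 1" "\<lambda>w. card (I w)"] that N(3) by simp
  ultimately obtain w where "w \<in> N" "card (I w) < d - 1" using not_less by blast
  moreover from this have "adj r w" using N by blast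
  ultimately show ?thesis
    using cops_needed_to_surround[OF \<open>adj r w\<close>] unfolding I_def by (meson leD)
qed

lemma ed_win_imp_surroundable:
  assumes "ed_win adj m C r" "m < d * (d - 1)" "r \<in> V" "\<forall>i<m. C i \<in> edges adj"
  shows "\<exists>C'. estep adj m C C' \<and> incident adj r \<subseteq> occ m C'"
  using assms
proof (induction rule: ed_win.induct)
  case (surrounded r C)
  moreover have "estep adj m C C" by (simp add: estep_def)
  ultimately show ?case by blast
next
  case (surround C C' r)
  then show ?case by blast
next
  case (move C C' r)
  have "\<forall>i<m. C' i \<in> edges adj" using move.hyps(1) move.prems(3) unfolding estep_def by metis
  with move.prems(1,2) obtain w
    where "adj r w" "\<not> (\<exists>C''. estep adj m C' C'' \<and> incident adj w \<subseteq> occ m C'')"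
    using some_neighbour_unsurroundable by blast
  moreover have "w \<in> V" using \<open>adj r w\<close> adj_in_V adj_sym by blast
  ultimately show ?case using move.IH \<open>\<forall>i<m. C' i \<in> edges adj\<close> move.prems(1) by blast
qed

lemma finite_edges: "finite V \<Longrightarrow> finite (edges adj)"
  by (rule finite_subset[of _ "Pow V"]) (auto simp: edges_def dest: adj_in_V adj_sym)

theorem edge_cop_number_ge:
  assumes "finite V" "V \<noteq> {}"
  shows "d * (d - 1) \<le> edge_cop_number V adj"
proof -
  let ?wins = "\<lambda>m. \<exists>C. (\<forall>i<m. C i \<in> edges adj) \<and> (\<forall>r\<in>V. ed_win adj m C r)"
  obtain n and f :: "nat \<Rightarrow> 'v set" where "edges adj = f ` {i. i < n}"
    using finite_edges[OF \<open>finite V\<close>] finite_conv_nat_seg_image by metis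
  then have "?wins n"
    by (intro exI[of _ f]) (auto simp: occ_def incident_def lessThan_def intro: ed_win.surrounded)
  then have "?wins (edge_cop_number V adj)" unfolding edge_cop_number_def by (rule LeastI)
  moreover have "\<not> ?wins m" if few: "m < d * (d - 1)" for m
  proof
    assume "?wins m"
    then obtain C where C: "\<forall>i<m. C i \<in> edges adj" "\<forall>r\<in>V. ed_win adj m C r" by blast
    obtain r where "r \<in> V" using \<open>V \<noteq> {}\<close> by blast
    then obtain w where "adj r w" "\<not> (\<exists>C'. estep adj m C C' \<and> incident adj w \<subseteq> occ m C')"
      using some_neighbour_unsurroundable[OF few C(1)] by blast
    moreover have "w \<in> V" using \<open>adj r w\<close> adj_in_V adj_sym by blast
    ultimately show False using ed_win_imp_surroundable C few by blast
  qed
  ultimately show ?thesis using not_le by blast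
qed

end


lemma mem_cells: "q \<in> cells k \<longleftrightarrow> fst q \<in> {1..k} \<and> snd q \<in> {1..k}"
  by (cases q) (simp add: cells_def)

lemma mem_row: "q \<in> row k i \<longleftrightarrow> fst q = i \<and> snd q \<in> {1..k}"
  by (cases q) (auto simp: row_def)

lemma mem_col: "q \<in> col k j \<longleftrightarrow> snd q = j \<and> fst q \<in> {1..k}"
  by (cases q) (auto simp: col_def)

lemma latin_square_row_point:
  assumes L: "latin_square k L" and n: "n \<in> {1..k}" and i: "i \<in> {1..k}"
  shows "\<exists>!q. q \<in> L n \<and> fst q = i"
proof -
  have "card (row k i \<inter> L n) = 1" using L n i unfolding latin_square_def by blast
  then obtain q where q: "row k i \<inter> L n = {q}" by (auto simp: card_1_singleton_iff)
  have "L n \<subseteq> cells k" using L n unfolding latin_square_def by blast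
  then have on_row: "q' \<in> row k i \<longleftrightarrow> fst q' = i" if "q' \<in> L n" for q'
    using that by (auto simp: mem_cells mem_row)
  show ?thesis
  proof (rule ex1I)
    show "q \<in> L n \<and> fst q = i" using q on_row by blast
    show "q' = q" if "q' \<in> L n \<and> fst q' = i" for q' using q on_row that by blast
  qed
qed

lemma latin_square_col_point:
  assumes L: "latin_square k L" and n: "n \<in> {1..k}" and j: "j \<in> {1..k}"
  shows "\<exists>!q. q \<in> L n \<and> snd q = j"
proof -
  have "card (col k j \<inter> L n) = 1" using L n j unfolding latin_square_def by blast
  then obtain q where q: "col k j \<inter> L n = {q}" by (auto simp: card_1_singleton_iff)
  have "L n \<subseteq> cells k" using L n unfolding latin_square_def by blast
  then have on_col: "q' \<in> col k j \<longleftrightarrow> snd q' = j" if "q' \<in> L n" for q'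
    using that by (auto simp: mem_cells mem_col)
  show ?thesis
  proof (rule ex1I)
    show "q \<in> L n \<and> snd q = j" using q on_col by blast
    show "q' = q" if "q' \<in> L n \<and> snd q' = j" for q' using q on_col that by blast
  qed
qed
locale mols_graph =
  fixes k :: nat and Ls :: "nat \<Rightarrow> nat \<Rightarrow> (nat \<times> nat) set"
  assumes mols: "MOLS k Ls" and two_le_k: "2 \<le> k"
begin

abbreviation V :: "gvert set" where "V \<equiv> Gk_V k Ls"
abbreviation adj :: "gvert \<Rightarrow> gvert \<Rightarrow> bool" where "adj \<equiv> Gk_adj k Ls"

definition line :: "(nat \<times> nat) set \<Rightarrow> bool" where
  "line S \<longleftrightarrow> S \<in> rows_set k \<union> parts_set k Ls"

lemma square_latin: "s \<in> {1..k-1} \<Longrightarrow> latin_square k (Ls s)"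
  using mols unfolding MOLS_def by blast

lemma squares_orthogonal:
  "s \<in> {1..k-1} \<Longrightarrow> t \<in> {1..k-1} \<Longrightarrow> s \<noteq> t \<Longrightarrow> n \<in> {1..k} \<Longrightarrow> n' \<in> {1..k} \<Longrightarrow>
    card (Ls s n \<inter> Ls t n') = 1"
  using mols unfolding MOLS_def orthogonal_def by blast

lemma part_subset_cells: "s \<in> {1..k-1} \<Longrightarrow> n \<in> {1..k} \<Longrightarrow> Ls s n \<subseteq> cells k"
  using square_latin unfolding latin_square_def by blast

lemma lineE:
  assumes "line S"
  obtains (row) i where "i \<in> {1..k}" "S = row k i"
    | (part) s n where "s \<in> {1..k-1}" "n \<in> {1..k}" "S = Ls s n"
  using assms unfolding line_def rows_set_def parts_set_def by blast

lemma line_row: "i \<in> {1..k} \<Longrightarrow> line (row k i)"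
  unfolding line_def rows_set_def by blast

lemma line_part: "S \<in> parts_set k Ls \<Longrightarrow> line S"
  unfolding line_def by blast

lemma line_subset_cells: "line S \<Longrightarrow> S \<subseteq> cells k"
proof (elim lineE)
  show "i \<in> {1..k} \<Longrightarrow> S = row k i \<Longrightarrow> S \<subseteq> cells k" for i by (auto simp: mem_row mem_cells)
  show "s \<in> {1..k-1} \<Longrightarrow> n \<in> {1..k} \<Longrightarrow> S = Ls s n \<Longrightarrow> S \<subseteq> cells k" for s n
    using part_subset_cells by simp
qed

lemma line_col_point:
  assumes "line S" "j \<in> {1..k}"
  shows "\<exists>!q. q \<in> S \<and> snd q = j"
  using assms(1)
proof (cases rule: lineE)
  case (row i)
  then show ?thesis using assms(2) by (auto simp: mem_row)
next
  case (part s n)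
  then show ?thesis using latin_square_col_point[OF square_latin] assms(2) by simp
qed

lemma card_line:
  assumes "line S"
  shows "card S = k"
proof -
  have cells: "fst q \<in> {1..k} \<and> snd q \<in> {1..k}" if "q \<in> S" for q
    using that line_subset_cells[OF assms] by (auto simp: mem_cells)
  have "inj_on snd S"
    using line_col_point[OF assms] cells by (auto simp: inj_on_def)
  moreover have "snd ` S = {1..k}"
  proof
    show "snd ` S \<subseteq> {1..k}" using cells by auto
    show "{1..k} \<subseteq> snd ` S" using line_col_point[OF assms] by (metis image_eqI subsetI)
  qed
  ultimately show ?thesis using card_image by fastforce
qed

lemma lines_share_at_most_one_point:
  assumes "line S" "line T" "p \<in> S" "p \<in> T" "q \<in> S" "q \<in> T" "p \<noteq> q"
  shows "S = T"
proof (rule lineE[OF assms(1)]; rule lineE[OF assms(2)])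
  fix i i' assume "S = row k i" "T = row k i'"
  moreover from this have "i = i'" using assms(3,4) by (simp add: mem_row)
  ultimately show "S = T" by simp
next
  fix i s n assume i: "i \<in> {1..k}" and S: "S = row k i"
    and sn: "s \<in> {1..k-1}" "n \<in> {1..k}" and T: "T = Ls s n"
  have "fst p = i" "fst q = i" using S assms(3,5) by (simp_all add: mem_row)
  then have "p = q" using latin_square_row_point[OF square_latin[OF sn(1)] sn(2) i] T assms(4,6) by blast
  then show "S = T" using \<open>p \<noteq> q\<close> by blast
next
  fix i s n assume i: "i \<in> {1..k}" and T: "T = row k i"
    and sn: "s \<in> {1..k-1}" "n \<in> {1..k}" and S: "S = Ls s n"
  have "fst p = i" "fst q = i" using T assms(4,6) by (simp_all add: mem_row)
  then have "p = q" using latin_square_row_point[OF square_latin[OF sn(1)] sn(2) i] S assms(3,5) by blast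
  then show "S = T" using \<open>p \<noteq> q\<close> by blast
next
  fix s n t n'
  assume S: "s \<in> {1..k-1}" "n \<in> {1..k}" "S = Ls s n" and T: "t \<in> {1..k-1}" "n' \<in> {1..k}" "T = Ls t n'"
  show "S = T"
  proof (cases "s = t")
    case True
    have "Ls s n \<inter> Ls s n' = {}" if "n \<noteq> n'"
      using square_latin[OF S(1)] S(2) T(2) that unfolding latin_square_def by blast
    moreover have "p \<in> Ls s n \<inter> Ls s n'" using S(3) T(3) True assms(3,4) by simp
    ultimately have "n = n'" by auto
    then show ?thesis using True S T by simp
  next
    case False
    have "card (S \<inter> T) = 1" using squares_orthogonal[OF S(1) T(1) False S(2) T(2)] S(3) T(3) by simp
    then obtain x where "S \<inter> T = {x}" by (auto simp: card_1_singleton_iff)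
    moreover have "p \<in> S \<inter> T" "q \<in> S \<inter> T" using assms(3-6) by simp_all
    ultimately show ?thesis using \<open>p \<noteq> q\<close> by simp
  qed
qed

lemma part_row_point: "S \<in> parts_set k Ls \<Longrightarrow> i \<in> {1..k} \<Longrightarrow> \<exists>!q. q \<in> S \<and> fst q = i"
  unfolding parts_set_def using latin_square_row_point[OF square_latin] by blast

lemma finite_lines: "finite {S. line S}"
proof -
  have "rows_set k = row k ` {1..k}" unfolding rows_set_def by blast
  moreover have "parts_set k Ls = (\<lambda>(s, n). Ls s n) ` ({1..k-1} \<times> {1..k})"
    unfolding parts_set_def by force
  ultimately show ?thesis unfolding line_def by simp
qed

lemma cell_in_part: "s \<in> {1..k-1} \<Longrightarrow> p \<in> cells k \<Longrightarrow> \<exists>n\<in>{1..k}. p \<in> Ls s n"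
  using square_latin unfolding latin_square_def by blast

lemma lines_meeting_once_differ: "line S \<Longrightarrow> card (S \<inter> T) = 1 \<Longrightarrow> S \<noteq> T"
  using card_line two_le_k by auto

lemma lines_through_cell:
  assumes "p \<in> cells k"
  shows "k \<le> card {S. line S \<and> p \<in> S}"
proof -
  obtain ns where ns: "\<And>s. s \<in> {1..k-1} \<Longrightarrow> ns s \<in> {1..k} \<and> p \<in> Ls s (ns s)"
    using bchoice[of "{1..k-1}" "\<lambda>s n. n \<in> {1..k} \<and> p \<in> Ls s n"] cell_in_part[OF _ assms] by blast
  let ?parts = "(\<lambda>s. Ls s (ns s)) ` {1..k-1}"
  have row: "fst p \<in> {1..k}" "p \<in> row k (fst p)" using assms by (simp_all add: mem_cells mem_row)
  have part: "line (Ls s (ns s))" if "s \<in> {1..k-1}" for s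
    using ns[OF that] that by (intro line_part) (auto simp: parts_set_def)
  have "inj_on (\<lambda>s. Ls s (ns s)) {1..k-1}"
  proof (rule inj_onI, rule ccontr)
    fix s t assume s: "s \<in> {1..k-1}" and t: "t \<in> {1..k-1}" and "s \<noteq> t"
    then have "card (Ls s (ns s) \<inter> Ls t (ns t)) = 1"
      using squares_orthogonal ns by simp
    then show "Ls s (ns s) = Ls t (ns t) \<Longrightarrow> False" using lines_meeting_once_differ part[OF s] by blast
  qed
  then have "card ?parts = k - 1" by (simp add: card_image)
  moreover have "row k (fst p) \<notin> ?parts"
  proof
    assume "row k (fst p) \<in> ?parts"
    then obtain s where s: "s \<in> {1..k-1}" and same: "row k (fst p) = Ls s (ns s)" by blast
    have "card (row k (fst p) \<inter> Ls s (ns s)) = 1"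
      using square_latin[OF s] ns[OF s] row(1) unfolding latin_square_def by blast
    then show False using lines_meeting_once_differ line_row[OF row(1)] same by blast
  qed
  ultimately have "card (insert (row k (fst p)) ?parts) = k" using two_le_k by simp
  moreover have "insert (row k (fst p)) ?parts \<subseteq> {S. line S \<and> p \<in> S}"
    using line_row[OF row(1)] row(2) part ns by auto
  moreover have "finite {S. line S \<and> p \<in> S}"
    using finite_lines by (rule finite_subset[rotated]) blast
  ultimately show ?thesis by (metis card_mono)
qed

lemma Cell_in_V [simp]: "Cell p \<in> V \<longleftrightarrow> p \<in> cells k"
  unfolding Gk_V_def by auto

lemma Blk_in_V [simp]: "Blk S \<in> V \<longleftrightarrow> line S"
  unfolding Gk_V_def line_def by auto

lemma adj_Cell_Blk [simp]: "adj (Cell p) (Blk S) \<longleftrightarrow> line S \<and> p \<in> S"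
  unfolding Gk_adj_def using line_subset_cells by auto

lemma adj_Blk_Cell [simp]: "adj (Blk S) (Cell p) \<longleftrightarrow> line S \<and> p \<in> S"
  unfolding Gk_adj_def using line_subset_cells by auto

lemma not_adj_Cell_Cell [simp]: "\<not> adj (Cell p) (Cell q)"
  unfolding Gk_adj_def by auto

lemma not_adj_Blk_Blk [simp]: "\<not> adj (Blk S) (Blk T)"
  unfolding Gk_adj_def by auto

lemma finite_V: "finite V"
  using finite_lines unfolding Gk_V_def line_def cells_def by simp

lemma degree:
  assumes "v \<in> V"
  shows "k \<le> card {w. adj v w}"
proof (cases v)
  case (Cell p)
  have "{w. adj v w} = Blk ` {S. line S \<and> p \<in> S}"
  proof (intro set_eqI iffI)
    show "w \<in> {w. adj v w} \<Longrightarrow> w \<in> Blk ` {S. line S \<and> p \<in> S}" for w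
      using Cell by (cases w) auto
  qed (use Cell in auto)
  then show ?thesis using lines_through_cell assms Cell by (simp add: card_image inj_on_def)
next
  case (Blk S)
  have "{w. adj v w} = Cell ` S"
  proof (intro set_eqI iffI)
    show "w \<in> {w. adj v w} \<Longrightarrow> w \<in> Cell ` S" for w
      using Blk by (cases w) auto
  qed (use Blk assms in auto)
  then show ?thesis using card_line assms Blk by (simp add: card_image inj_on_def)
qed

sublocale G: bipartite_square_free_graph V adj k "\<lambda>v. case v of Cell _ \<Rightarrow> True | Blk _ \<Rightarrow> False"
proof
  show "adj u v \<Longrightarrow> adj v u" for u v by (auto simp: Gk_adj_def)
  show "adj u v \<Longrightarrow> u \<in> V" for u v by (simp add: Gk_adj_def)
  show "v \<in> V \<Longrightarrow> k \<le> card {w. adj v w}" for v by (rule degree)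
  show "adj x a \<Longrightarrow> adj x b \<Longrightarrow> adj y a \<Longrightarrow> adj y b \<Longrightarrow> a \<noteq> b \<Longrightarrow> x = y" for x y a b
    by (cases x; cases y; cases a; cases b; simp; metis lines_share_at_most_one_point)
  show "adj u v \<Longrightarrow> (case u of Cell _ \<Rightarrow> True | Blk _ \<Rightarrow> False) \<noteq> (case v of Cell _ \<Rightarrow> True | Blk _ \<Rightarrow> False)"
    for u v by (cases u; cases v) simp_all
qed

text \<open>Cops are numbered from 0, rows from 1: cop \<open>i\<close> guards row \<open>i + 1\<close>.\<close>
definition row_cop :: "nat \<Rightarrow> gvert" where
  "row_cop i = Blk (row k (Suc i))"

definition row_point :: "(nat \<times> nat) set \<Rightarrow> nat \<Rightarrow> nat \<times> nat" where
  "row_point S i = (THE q. q \<in> S \<and> fst q = i)"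

definition part_cop :: "(nat \<times> nat) set \<Rightarrow> nat \<Rightarrow> gvert" where
  "part_cop S i = Cell (row_point S (Suc i))"

lemma row_point: "S \<in> parts_set k Ls \<Longrightarrow> i \<in> {1..k} \<Longrightarrow> row_point S i \<in> S \<and> fst (row_point S i) = i"
  unfolding row_point_def by (rule theI') (rule part_row_point)

lemma row_point_eq:
  assumes "S \<in> parts_set k Ls" "q \<in> S"
  shows "row_point S (fst q) = q"
proof -
  have "q \<in> cells k" using assms line_subset_cells line_part by blast
  then have i: "fst q \<in> {1..k}" by (simp add: mem_cells)
  show ?thesis using part_row_point[OF assms(1) i] row_point[OF assms(1) i] assms(2) by blast
qed

lemma row_cop_in_V: "i < k \<Longrightarrow> row_cop i \<in> V"
  by (simp add: row_cop_def line_row)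

lemma occ_row_cops: "occ k row_cop = Blk ` rows_set k"
proof -
  have "row_cop ` {..<k} = Blk ` row k ` Suc ` {..<k}" by (auto simp: row_cop_def)
  also have "Suc ` {..<k} = {1..k}" by (rule image_Suc_lessThan)
  finally show ?thesis unfolding occ_def rows_set_def by blast
qed

lemma row_points_eq_part:
  assumes "S \<in> parts_set k Ls"
  shows "row_point S ` {1..k} = S"
proof
  show "row_point S ` {1..k} \<subseteq> S" using assms row_point by auto
  show "S \<subseteq> row_point S ` {1..k}"
  proof
    fix q assume "q \<in> S"
    then have "q \<in> cells k" using assms line_subset_cells line_part by blast
    then have "fst q \<in> {1..k}" by (simp add: mem_cells)
    then show "q \<in> row_point S ` {1..k}" using row_point_eq[OF assms \<open>q \<in> S\<close>] by (metis image_eqI)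
  qed
qed

lemma occ_part_cops:
  assumes "S \<in> parts_set k Ls"
  shows "occ k (part_cop S) = Cell ` S"
proof -
  have "occ k (part_cop S) = Cell ` row_point S ` Suc ` {..<k}"
    unfolding occ_def part_cop_def by (simp add: image_image)
  then show ?thesis using row_points_eq_part[OF assms] by (simp add: image_Suc_lessThan)
qed

lemma row_point_in_row:
  assumes "S \<in> parts_set k Ls" "i \<in> {1..k}"
  shows "row_point S i \<in> row k i"
proof -
  have "row_point S i \<in> cells k" using row_point[OF assms] line_subset_cells line_part assms(1) by blast
  then show ?thesis using row_point[OF assms] by (simp add: mem_cells mem_row)
qed

lemma vstep_row_to_part: "S \<in> parts_set k Ls \<Longrightarrow> vstep adj k row_cop (part_cop S)"
  unfolding vstep_def row_cop_def part_cop_def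
  using row_point_in_row line_row by simp

lemma row_cops_catch:
  assumes "r \<in> V"
  shows "cl_win adj k row_cop r"
proof (cases r)
  case (Cell p)
  then have "fst p \<in> {1..k}" "p \<in> row k (fst p)" using assms by (simp_all add: mem_cells mem_row)
  then have i: "fst p - 1 < k" and "adj (row_cop (fst p - 1)) r" using Cell by (auto simp: row_cop_def line_row)
  then have "vstep adj k row_cop (row_cop(fst p - 1 := r))" by (rule vstep_fun_upd)
  moreover have "r \<in> occ k (row_cop(fst p - 1 := r))" using i by (rule in_occ_fun_upd)
  ultimately show ?thesis by (rule cl_win.catch)
next
  case (Blk S)
  show ?thesis
  proof (cases "S \<in> rows_set k")
    case True
    then show ?thesis using Blk occ_row_cops by (intro cl_win.caught) simp
  next
    case False
    then have S: "S \<in> parts_set k Ls" using assms Blk by (simp add: line_def)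
    have "cl_win adj k (part_cop S) r'" if "r' = r \<or> adj r r'" for r'
      using that
    proof
      assume "r' = r"
      have "adj (part_cop S 0) r" using Blk S row_point[OF S] two_le_k line_part by (simp add: part_cop_def)
      have "0 < k" using two_le_k by simp
      then have "vstep adj k (part_cop S) ((part_cop S)(0 := r))"
        using \<open>adj (part_cop S 0) r\<close> by (rule vstep_fun_upd)
      moreover have "r \<in> occ k ((part_cop S)(0 := r))" using \<open>0 < k\<close> by (rule in_occ_fun_upd)
      ultimately show ?thesis unfolding \<open>r' = r\<close> by (rule cl_win.catch)
    next
      assume "adj r r'"
      then obtain q where "r' = Cell q" "q \<in> S" using Blk by (cases r') auto
      then show ?thesis using occ_part_cops[OF S] by (intro cl_win.caught) simp
    qed
    then show ?thesis by (intro cl_win.move[OF vstep_row_to_part[OF S]]) blast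
  qed
qed

lemma exists_undominated_cell:
  assumes "m < k"
  shows "\<exists>r\<in>V. \<forall>i<m. C i \<noteq> r \<and> \<not> adj (C i) r"
proof -
  define N where "N = (\<lambda>i. Cell (i, 1)) ` {1..k}"
  have "\<exists>w\<in>N. \<forall>i<m. \<not> (C i = w \<or> adj (C i) w)"
  proof (rule exists_uncovered)
    show "finite N" "m < card N" using assms by (simp_all add: N_def card_image inj_on_def)
    fix i a b assume a: "a \<in> N" "C i = a \<or> adj (C i) a" and b: "b \<in> N" "C i = b \<or> adj (C i) b"
    then obtain x y where xy: "a = Cell (x, 1)" "b = Cell (y, 1)" unfolding N_def by blast
    show "a = b"
    proof (cases "C i")
      case (Cell c)
      then show ?thesis using a b xy by auto
    next
      case (Blk S)
      then have "line S" "(x, 1) \<in> S" "(y, 1) \<in> S" using a b xy by auto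
      moreover have "(1::nat) \<in> {1..k}" using two_le_k by simp
      ultimately show ?thesis using line_col_point xy by (metis snd_conv)
    qed
  qed
  moreover have "N \<subseteq> V" using two_le_k by (auto simp: N_def mem_cells)
  ultimately show ?thesis by blast
qed

lemma cop_number_eq: "cop_number V adj = k"
  unfolding cop_number_def
proof (rule Least_equality)
  show "\<exists>C. (\<forall>i<k. C i \<in> V) \<and> (\<forall>r\<in>V. cl_win adj k C r)"
    using row_cop_in_V row_cops_catch by blast
  show "k \<le> m" if "\<exists>C. (\<forall>i<m. C i \<in> V) \<and> (\<forall>r\<in>V. cl_win adj m C r)" for m
    using that exists_undominated_cell G.undominated_robber_escapes not_le by metis
qed

lemma rv_part:
  assumes "S \<in> parts_set k Ls"
  shows "rv_win adj (Suc k) (row_cop(k := X)) (Blk S)"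
proof (rule rv_win.surround)
  show "vstep adj (Suc k) (row_cop(k := X)) ((part_cop S)(k := X))"
    using vstep_row_to_part[OF assms] by (simp add: vstep_fun_upd_last)
  show "{v. adj (Blk S) v} \<subseteq> occ (Suc k) ((part_cop S)(k := X))"
  proof
    fix v assume "v \<in> {v. adj (Blk S) v}"
    then obtain q where "v = Cell q" "q \<in> S" by (cases v) auto
    then show "v \<in> occ (Suc k) ((part_cop S)(k := X))"
      by (simp add: occ_fun_upd_last occ_part_cops[OF assms])
  qed
qed

lemma rv_leave_cell:
  assumes "adj (Cell p) r" "r \<notin> occ (Suc k) (row_cop(k := X))"
  shows "rv_win adj (Suc k) (row_cop(k := X)) r"
proof -
  obtain S where S: "r = Blk S" "line S" using assms(1) by (cases r) auto
  then have "S \<notin> rows_set k" using assms(2) by (auto simp: occ_fun_upd_last occ_row_cops)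
  then show ?thesis using S rv_part by (simp add: line_def)
qed

text \<open>The extra cop chases the robber through the cells while the row cops stay put: a robber
  driven off his cell must flee to a part, where the row cops surround him.\<close>
lemma rv_chaser_adjacent:
  assumes "X = Cell p \<or> adj X (Cell p)"
  shows "rv_win adj (Suc k) (row_cop(k := X)) (Cell p)"
proof (rule rv_win.move)
  show "vstep adj (Suc k) (row_cop(k := X)) (row_cop(k := Cell p))"
    using assms by (auto simp: vstep_fun_upd_last vstep_def)
  show "\<forall>r'. (r' = Cell p \<or> adj (Cell p) r') \<and> r' \<notin> occ (Suc k) (row_cop(k := Cell p)) \<longrightarrow>
      rv_win adj (Suc k) (row_cop(k := Cell p)) r'"
  proof (intro allI impI)
    fix r' assume r': "(r' = Cell p \<or> adj (Cell p) r') \<and> r' \<notin> occ (Suc k) (row_cop(k := Cell p))"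
    then have "adj (Cell p) r'" by (auto simp: occ_fun_upd_last)
    then show "rv_win adj (Suc k) (row_cop(k := Cell p)) r'" using r' by (intro rv_leave_cell) auto
  qed
qed

lemma rv_chaser_at_distance_2:
  assumes "line S" "p \<in> S" "q \<in> S"
  shows "rv_win adj (Suc k) (row_cop(k := Cell q)) (Cell p)"
proof (rule rv_win.move)
  show "vstep adj (Suc k) (row_cop(k := Cell q)) (row_cop(k := Blk S))"
    using assms by (auto simp: vstep_fun_upd_last vstep_def)
  show "\<forall>r'. (r' = Cell p \<or> adj (Cell p) r') \<and> r' \<notin> occ (Suc k) (row_cop(k := Blk S)) \<longrightarrow>
      rv_win adj (Suc k) (row_cop(k := Blk S)) r'"
  proof (intro allI impI)
    fix r' assume r': "(r' = Cell p \<or> adj (Cell p) r') \<and> r' \<notin> occ (Suc k) (row_cop(k := Blk S))"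
    show "rv_win adj (Suc k) (row_cop(k := Blk S)) r'"
    proof (cases "r' = Cell p")
      case True
      then show ?thesis using rv_chaser_adjacent assms by simp
    next
      case False
      then show ?thesis using r' by (intro rv_leave_cell) auto
    qed
  qed
qed

lemma rv_chaser_at_distance_3:
  assumes "line S" "p \<in> S" "q \<in> S" "line T" "q \<in> T"
  shows "rv_win adj (Suc k) (row_cop(k := Blk T)) (Cell p)"
proof (rule rv_win.move)
  show "vstep adj (Suc k) (row_cop(k := Blk T)) (row_cop(k := Cell q))"
    using assms by (auto simp: vstep_fun_upd_last vstep_def)
  show "\<forall>r'. (r' = Cell p \<or> adj (Cell p) r') \<and> r' \<notin> occ (Suc k) (row_cop(k := Cell q)) \<longrightarrow>
      rv_win adj (Suc k) (row_cop(k := Cell q)) r'"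
  proof (intro allI impI)
    fix r' assume r': "(r' = Cell p \<or> adj (Cell p) r') \<and> r' \<notin> occ (Suc k) (row_cop(k := Cell q))"
    show "rv_win adj (Suc k) (row_cop(k := Cell q)) r'"
    proof (cases "r' = Cell p")
      case True
      then show ?thesis using rv_chaser_at_distance_2[OF assms(1-3)] assms by simp
    next
      case False
      then show ?thesis using r' by (intro rv_leave_cell) auto
    qed
  qed
qed

text \<open>Every cell \<open>p\<close> is at distance at most 3 from the first row: through the part of
  the first square containing \<open>p\<close>, which meets the first row.\<close>
lemma rv_cops_win:
  assumes "r \<in> V" "r \<notin> occ (Suc k) (row_cop(k := Blk (row k 1)))"
  shows "rv_win adj (Suc k) (row_cop(k := Blk (row k 1))) r"
proof (cases r)
  case (Blk S)
  then have "line S" using assms(1) by simp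
  moreover have "S \<notin> rows_set k" using assms(2) Blk by (auto simp: occ_fun_upd_last occ_row_cops)
  ultimately show ?thesis using Blk rv_part by (simp add: line_def)
next
  case (Cell p)
  have one: "(1::nat) \<in> {1..k-1}" "(1::nat) \<in> {1..k}" using two_le_k by auto
  have "p \<in> cells k" using assms(1) Cell by simp
  then obtain n where n: "n \<in> {1..k}" "p \<in> Ls 1 n" using cell_in_part[OF one(1)] by blast
  then have S: "Ls 1 n \<in> parts_set k Ls" using one unfolding parts_set_def by blast
  show ?thesis
    using rv_chaser_at_distance_3[OF line_part[OF S] n(2) conjunct1[OF row_point[OF S one(2)]]
        line_row[OF one(2)] row_point_in_row[OF S one(2)]] Cell by simp
qed

lemma rv_cop_number_le: "rv_cop_number V adj \<le> Suc k"
  unfolding rv_cop_number_def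
proof (rule Least_le, intro exI conjI)
  show "\<forall>i<Suc k. (row_cop(k := Blk (row k 1))) i \<in> V"
    using row_cop_in_V line_row two_le_k by (simp add: less_Suc_eq)
  show "\<forall>r\<in>V. r \<notin> occ (Suc k) (row_cop(k := Blk (row k 1))) \<longrightarrow>
      rv_win adj (Suc k) (row_cop(k := Blk (row k 1))) r"
    using rv_cops_win by blast
qed

lemma edge_cop_number_ge: "k * (k - 1) \<le> edge_cop_number V adj"
proof (rule G.edge_cop_number_ge)
  show "finite V" by (rule finite_V)
  have "Cell (1, 1) \<in> V" using two_le_k by (simp add: mem_cells)
  then show "V \<noteq> {}" by blast
qed

end

theorem lemma3:
  fixes k :: nat and Ls :: "nat \<Rightarrow> nat \<Rightarrow> (nat \<times> nat) set"
  assumes "\<exists>p e. prime p \<and> e \<ge> 1 \<and> k = p ^ e"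
    and "MOLS k Ls"
  shows "cop_number (Gk_V k Ls) (Gk_adj k Ls) = k \<and>
         rv_cop_number (Gk_V k Ls) (Gk_adj k Ls) \<le> k + 1 \<and>
         edge_cop_number (Gk_V k Ls) (Gk_adj k Ls) \<ge> k * (k - 1)"
proof -
  obtain p e where pe: "prime p" "e \<ge> 1" "k = p ^ e" using assms(1) by blast
  have "2 \<le> p" using prime_ge_2_nat[OF pe(1)] .
  also have "p \<le> p ^ e" using \<open>2 \<le> p\<close> pe(2) by (simp add: self_le_power)
  finally have "2 \<le> k" using pe(3) by simp
  interpret mols_graph k Ls using assms(2) \<open>2 \<le> k\<close> by unfold_locales
  show ?thesis using cop_number_eq rv_cop_number_le edge_cop_number_ge by simp
qed

end
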